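(* Let $\sigma>0$, $\eta>0$, $\hat\alpha>0$, $h>0$, $r\ge0$, $a\in\mathbb{R}$, and for $\beta\ge0$ let $v_\beta$ denote the unique $C^1[0,\infty)$ solution of $\frac{\sigma^2}2v'(y)=\beta+\frac{\hat\alpha}4v(y)^2+\eta y(v(y)-\frac h\eta)-av(y)$, $y\ge0$, $v(0)=-r$. Let $\underline\beta_2=-ar-\frac{\hat\alpha r^2}4$. If $a>-\frac{\hat\alpha}4r$ then $\beta_1^*:=\inf\mathcal I_1>0$; if $a\le-\frac{\hat\alpha}4r$ then $\beta_2^*:=\inf\mathcal I_2>0$.
   Context: $\mathcal I_1=\{\beta\ge0: v_\beta$ is nondecreasing on $(0,\infty)\}$ and $\mathcal I_2=\{\beta>\underline\beta_2: v_\beta$ is nondecreasing on $(0,\infty)\}$. *)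

theory Defs
  imports "HOL-Analysis.Analysis"
begin

text \<open>v is a C^1[0,oo) solution of
  (sigma^2/2) v'(y) = beta + (alpha/4) v(y)^2 + eta*y*(v(y) - h/eta) - a*v(y),  v(0) = -r.
  The derivative is taken within [0,oo) (one-sided at 0); its continuity is automatic
  since it equals a continuous expression in y and v(y).\<close>
definition ode_sol :: "real \<Rightarrow> real \<Rightarrow> real \<Rightarrow> real \<Rightarrow> real \<Rightarrow> real \<Rightarrow> real \<Rightarrow> (real \<Rightarrow> real) \<Rightarrow> bool" where
  "ode_sol \<sigma> \<eta> \<alpha> h r a \<beta> v \<longleftrightarrow>
     v 0 = - r \<and>
     (\<forall>y\<ge>0. (v has_real_derivative
        (2 / \<sigma>\<^sup>2) * (\<beta> + \<alpha> / 4 * (v y)\<^sup>2 + \<eta> * y * (v y - h / \<eta>) - a * v y))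
        (at y within {0..})) \<and>
     continuous_on {0..} (\<lambda>y. (2 / \<sigma>\<^sup>2) * (\<beta> + \<alpha> / 4 * (v y)\<^sup>2 + \<eta> * y * (v y - h / \<eta>) - a * v y))"

text \<open>"v_beta is nondecreasing on (0,oo)": the (unique) solution v_beta exists and is nondecreasing.\<close>
definition I1 :: "real \<Rightarrow> real \<Rightarrow> real \<Rightarrow> real \<Rightarrow> real \<Rightarrow> real \<Rightarrow> real set" where
  "I1 \<sigma> \<eta> \<alpha> h r a = {\<beta>. \<beta> \<ge> 0 \<and>
      (\<exists>v. ode_sol \<sigma> \<eta> \<alpha> h r a \<beta> v \<and> mono_on {0<..} v)}"

definition beta2_low :: "real \<Rightarrow> real \<Rightarrow> real \<Rightarrow> real" where
  "beta2_low \<alpha> r a = - a * r - \<alpha> * r\<^sup>2 / 4"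

definition I2 :: "real \<Rightarrow> real \<Rightarrow> real \<Rightarrow> real \<Rightarrow> real \<Rightarrow> real \<Rightarrow> real set" where
  "I2 \<sigma> \<eta> \<alpha> h r a = {\<beta>. \<beta> > beta2_low \<alpha> r a \<and> \<beta> \<ge> 0 \<and>
      (\<exists>v. ode_sol \<sigma> \<eta> \<alpha> h r a \<beta> v \<and> mono_on {0<..} v)}"

end

(*
  A nondecreasing solution has nonnegative slope: y (h - \<eta> v y) \<le> G (v y), where
  G = ode_quad \<alpha> a \<beta>. So v cannot stay below a level vs < h/\<eta>, and the time x at
  which it reaches vs satisfies x (h - \<eta> vs) \<le> G vs. Climbing from -r to vs with slope at most
  (2/\<sigma>\<^sup>2) M, M an upper bound of G on [-r, vs], also forces (vs + r) \<le> x (2/\<sigma>\<^sup>2) M.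
  For small \<beta> these are incompatible: take vs = 0 if r > 0 and vs = \<beta> if r = 0. When r = 0
  and a > 0, where \<beta> = 0 must be excluded too, already G vs > 0 fails for small \<beta> and vs.
*)
theory Submission
  imports Defs
begin

definition ode_quad :: "real \<Rightarrow> real \<Rightarrow> real \<Rightarrow> real \<Rightarrow> real" where
  "ode_quad \<alpha> a \<beta> w = \<beta> + \<alpha> / 4 * w\<^sup>2 - a * w"

lemma ode_sol_has_real_derivative:
  assumes "ode_sol \<sigma> \<eta> \<alpha> h r a \<beta> v" "\<eta> \<noteq> 0" "y > 0"
  shows "(v has_real_derivative 2 / \<sigma>\<^sup>2 * (ode_quad \<alpha> a \<beta> (v y) - y * (h - \<eta> * v y))) (at y)"
proof -
  have "(v has_real_derivative
          2 / \<sigma>\<^sup>2 * (\<beta> + \<alpha> / 4 * (v y)\<^sup>2 + \<eta> * y * (v y - h / \<eta>) - a * v y)) (at y within {0..})"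
    using assms unfolding ode_sol_def by simp
  moreover have "at y within {0..} = at y"
    using \<open>y > 0\<close> by (intro at_within_interior) auto
  moreover have "\<beta> + \<alpha> / 4 * (v y)\<^sup>2 + \<eta> * y * (v y - h / \<eta>) - a * v y
      = ode_quad \<alpha> a \<beta> (v y) - y * (h - \<eta> * v y)"
    using \<open>\<eta> \<noteq> 0\<close> unfolding ode_quad_def by (simp add: field_simps)
  ultimately show ?thesis
    by (simp only:)
qed

lemma ode_sol_continuous_on:
  assumes "ode_sol \<sigma> \<eta> \<alpha> h r a \<beta> v"
  shows "continuous_on {0..} v"
proof -
  have "\<exists>D. (v has_real_derivative D) (at y within {0..})" if "y \<in> {0..}" for y
    using assms that unfolding ode_sol_def by auto
  then show ?thesis
    by (meson DERIV_continuous continuous_on_eq_continuous_within)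
qed

lemma ode_sol_mean_value:
  assumes sol: "ode_sol \<sigma> \<eta> \<alpha> h r a \<beta> v" and "\<eta> \<noteq> 0" "0 \<le> s" "s < t"
  obtains z where "s < z" "z < t"
    "v t - v s = (t - s) * (2 / \<sigma>\<^sup>2 * (ode_quad \<alpha> a \<beta> (v z) - z * (h - \<eta> * v z)))"
proof -
  have "continuous_on {s..t} v"
    using ode_sol_continuous_on[OF sol] by (rule continuous_on_subset) (use assms in auto)
  moreover have "v differentiable (at z)" if "s < z" "z < t" for z
    using ode_sol_has_real_derivative[OF sol \<open>\<eta> \<noteq> 0\<close>] that assms(3)
    by (meson le_less_trans real_differentiable_def)
  ultimately obtain l z where z: "s < z" "z < t" "(v has_real_derivative l) (at z)"
    "v t - v s = (t - s) * l"
    using MVT[OF \<open>s < t\<close>] by blast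
  moreover have "(v has_real_derivative
      2 / \<sigma>\<^sup>2 * (ode_quad \<alpha> a \<beta> (v z) - z * (h - \<eta> * v z))) (at z)"
    using ode_sol_has_real_derivative[OF sol \<open>\<eta> \<noteq> 0\<close>] z assms(3) by simp
  ultimately have "l = 2 / \<sigma>\<^sup>2 * (ode_quad \<alpha> a \<beta> (v z) - z * (h - \<eta> * v z))"
    using DERIV_unique by blast
  with z show ?thesis
    by (intro that[of z]) simp_all
qed

lemma mono_ode_sol_slope_bound:
  assumes "ode_sol \<sigma> \<eta> \<alpha> h r a \<beta> v" "mono_on {0<..} v" "\<sigma> \<noteq> 0" "\<eta> \<noteq> 0" "y > 0"
  shows "y * (h - \<eta> * v y) \<le> ode_quad \<alpha> a \<beta> (v y)"
proof -
  have "0 \<le> 2 / \<sigma>\<^sup>2 * (ode_quad \<alpha> a \<beta> (v y) - y * (h - \<eta> * v y))"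
    using assms by (intro mono_on_imp_deriv_nonneg[OF _ ode_sol_has_real_derivative]) (auto simp: interior_open)
  then show ?thesis
    using \<open>\<sigma> \<noteq> 0\<close> by (simp add: zero_le_divide_iff)
qed

lemma mono_ode_sol_ge_initial:
  assumes "ode_sol \<sigma> \<eta> \<alpha> h r a \<beta> v" "mono_on {0<..} v" "y > 0"
  shows "- r \<le> v y"
proof -
  have "(v \<longlongrightarrow> v 0) (at 0 within {0..})"
    using ode_sol_continuous_on[OF assms(1)] by (simp add: continuous_on_def)
  then have "(v \<longlongrightarrow> v 0) (at_right 0)"
    by (rule tendsto_within_subset) auto
  moreover have "eventually (\<lambda>t. v t \<le> v y) (at_right 0)"
    using eventually_at_right_real[OF \<open>y > 0\<close>]
    by eventually_elim (use assms(2) in \<open>auto intro: mono_onD\<close>)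
  ultimately have "v 0 \<le> v y"
    by (rule tendsto_upperbound) simp
  then show ?thesis
    using assms(1) unfolding ode_sol_def by simp
qed

lemma mono_ode_sol_reaches:
  assumes sol: "ode_sol \<sigma> \<eta> \<alpha> h r a \<beta> v" and mono: "mono_on {0<..} v"
    and "\<sigma> \<noteq> 0" "\<eta> > 0" "- r < vs" "\<eta> * vs < h"
  shows "\<exists>x>0. v x = vs"
proof (rule ccontr)
  \<comment> \<open>If v stayed below vs, G (v y) would stay bounded while y (h - \<eta> v y) grows linearly.\<close>
  assume not_reached: "\<not> ?thesis"
  have below: "v y < vs" if y: "y \<ge> 0" for y
  proof (rule ccontr)
    assume "\<not> v y < vs"
    moreover have "continuous_on {0..y} v"
      using ode_sol_continuous_on[OF sol] by (rule continuous_on_subset) auto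
    moreover have "v 0 = - r"
      using sol unfolding ode_sol_def by simp
    ultimately obtain x where "0 \<le> x" "v x = vs"
      using IVT'[of v 0 vs y] y \<open>- r < vs\<close> by auto
    with not_reached \<open>v 0 = - r\<close> \<open>- r < vs\<close> show False
      by (metis less_eq_real_def less_irrefl)
  qed
  have "continuous_on {v 1..vs} (ode_quad \<alpha> a \<beta>)"
    unfolding ode_quad_def by (intro continuous_intros)
  then obtain M where M: "\<And>w. w \<in> {v 1..vs} \<Longrightarrow> ode_quad \<alpha> a \<beta> w \<le> M"
    using continuous_attains_sup[of "{v 1..vs}" "ode_quad \<alpha> a \<beta>"] below[of 1] by force
  define y where "y = max 1 ((M + 1) / (h - \<eta> * vs))"
  have "y \<ge> 1"
    unfolding y_def by simp
  have "M + 1 = (M + 1) / (h - \<eta> * vs) * (h - \<eta> * vs)"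
    using \<open>\<eta> * vs < h\<close> by simp
  also have "\<dots> \<le> y * (h - \<eta> * vs)"
    using \<open>\<eta> * vs < h\<close> unfolding y_def by (intro mult_right_mono) auto
  also have "\<dots> \<le> y * (h - \<eta> * v y)"
    using below[of y] \<open>y \<ge> 1\<close> \<open>\<eta> > 0\<close> by (intro mult_left_mono) auto
  also have "\<dots> \<le> ode_quad \<alpha> a \<beta> (v y)"
    using mono_ode_sol_slope_bound[OF sol mono] assms \<open>y \<ge> 1\<close> by simp
  also have "\<dots> \<le> M"
    using below[of y] mono_onD[OF mono, of 1 y] \<open>y \<ge> 1\<close> by (intro M) auto
  finally show False
    by simp
qed

lemma mono_ode_sol_crossing:
  assumes sol: "ode_sol \<sigma> \<eta> \<alpha> h r a \<beta> v" and mono: "mono_on {0<..} v"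
    and "\<sigma> \<noteq> 0" "\<eta> > 0" "- r < vs" "\<eta> * vs < h"
  obtains x where "x > 0" "v x = vs" "x * (h - \<eta> * vs) \<le> ode_quad \<alpha> a \<beta> vs"
proof -
  obtain x where "x > 0" "v x = vs"
    using mono_ode_sol_reaches[OF assms] by blast
  with mono_ode_sol_slope_bound[OF sol mono] assms show ?thesis
    by (intro that) fastforce+
qed

lemma mono_ode_sol_quad_pos:
  assumes sol: "ode_sol \<sigma> \<eta> \<alpha> h r a \<beta> v" and mono: "mono_on {0<..} v"
    and "\<sigma> \<noteq> 0" "\<eta> > 0" "- r < vs" "\<eta> * vs < h"
  shows "0 < ode_quad \<alpha> a \<beta> vs"
proof -
  obtain x where "x > 0" "x * (h - \<eta> * vs) \<le> ode_quad \<alpha> a \<beta> vs"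
    using mono_ode_sol_crossing[OF assms] by blast
  moreover have "0 < x * (h - \<eta> * vs)"
    using \<open>x > 0\<close> \<open>\<eta> * vs < h\<close> by simp
  ultimately show ?thesis
    by linarith
qed

lemma mono_ode_sol_rise_bound:
  assumes sol: "ode_sol \<sigma> \<eta> \<alpha> h r a \<beta> v" and mono: "mono_on {0<..} v"
    and "\<eta> > 0" "x > 0" "\<eta> * v x < h"
    and M: "\<And>w. w \<in> {- r..v x} \<Longrightarrow> ode_quad \<alpha> a \<beta> w \<le> M"
  shows "v x + r \<le> x * (2 / \<sigma>\<^sup>2 * M)"
proof -
  obtain z where z: "0 < z" "z < x" and increment:
    "v x - v 0 = x * (2 / \<sigma>\<^sup>2 * (ode_quad \<alpha> a \<beta> (v z) - z * (h - \<eta> * v z)))"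
    using ode_sol_mean_value[OF sol _ order_refl \<open>x > 0\<close>] \<open>\<eta> > 0\<close> by (metis diff_zero less_irrefl)
  have "- r \<le> v z" "v z \<le> v x"
    using mono_ode_sol_ge_initial[OF sol mono] mono_onD[OF mono, of z x] z by auto
  moreover have "\<eta> * v z \<le> \<eta> * v x"
    using \<open>v z \<le> v x\<close> \<open>\<eta> > 0\<close> by simp
  then have "0 \<le> z * (h - \<eta> * v z)"
    using z \<open>\<eta> * v x < h\<close> by simp
  ultimately have "ode_quad \<alpha> a \<beta> (v z) - z * (h - \<eta> * v z) \<le> M"
    using M[of "v z"] by simp
  then have "v x - v 0 \<le> x * (2 / \<sigma>\<^sup>2 * M)"
    unfolding increment using \<open>x > 0\<close> by (intro mult_left_mono) auto
  moreover have "v 0 = - r"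
    using sol unfolding ode_sol_def by simp
  ultimately show ?thesis
    by simp
qed

lemma mono_ode_sol_crossing_bound:
  assumes sol: "ode_sol \<sigma> \<eta> \<alpha> h r a \<beta> v" and mono: "mono_on {0<..} v"
    and "\<sigma> \<noteq> 0" "\<eta> > 0" "- r < vs" "\<eta> * vs < h"
    and M: "\<And>w. w \<in> {- r..vs} \<Longrightarrow> ode_quad \<alpha> a \<beta> w \<le> M"
  shows "(vs + r) * (h - \<eta> * vs) \<le> 2 / \<sigma>\<^sup>2 * M * ode_quad \<alpha> a \<beta> vs"
proof -
  obtain x where x: "x > 0" "v x = vs" and crossing_time: "x * (h - \<eta> * vs) \<le> ode_quad \<alpha> a \<beta> vs"
    using mono_ode_sol_crossing[OF assms(1-6)] by blast
  have rise: "vs + r \<le> x * (2 / \<sigma>\<^sup>2 * M)"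
    using mono_ode_sol_rise_bound[OF sol mono \<open>\<eta> > 0\<close> \<open>x > 0\<close>] M x \<open>\<eta> * vs < h\<close> by simp
  then have "0 < x * (2 / \<sigma>\<^sup>2 * M)"
    using \<open>- r < vs\<close> by linarith
  then have "0 < 2 / \<sigma>\<^sup>2 * M"
    using zero_less_mult_pos \<open>x > 0\<close> by blast
  have "(vs + r) * (h - \<eta> * vs) \<le> x * (2 / \<sigma>\<^sup>2 * M) * (h - \<eta> * vs)"
    using rise \<open>\<eta> * vs < h\<close> by (intro mult_right_mono) auto
  also have "\<dots> = 2 / \<sigma>\<^sup>2 * M * (x * (h - \<eta> * vs))"
    by simp
  also have "\<dots> \<le> 2 / \<sigma>\<^sup>2 * M * ode_quad \<alpha> a \<beta> vs"
    using crossing_time \<open>0 < 2 / \<sigma>\<^sup>2 * M\<close> by (intro mult_left_mono) auto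
  finally show ?thesis .
qed

lemma ode_quad_le_abs_bound:
  assumes "\<alpha> \<ge> 0" "\<bar>w\<bar> \<le> R"
  shows "ode_quad \<alpha> a \<beta> w \<le> \<beta> + \<alpha> / 4 * R\<^sup>2 + \<bar>a\<bar> * R"
proof -
  have "\<alpha> / 4 * w\<^sup>2 \<le> \<alpha> / 4 * R\<^sup>2"
    using assms by (intro mult_left_mono abs_le_square_iff[THEN iffD1]) auto
  moreover have "- a * w \<le> \<bar>a\<bar> * \<bar>w\<bar>"
    by (simp add: abs_mult[symmetric])
  moreover have "\<bar>a\<bar> * \<bar>w\<bar> \<le> \<bar>a\<bar> * R"
    using assms by (intro mult_left_mono) auto
  ultimately show ?thesis
    unfolding ode_quad_def by linarith
qed

lemma mono_ode_sol_beta_bound_neg_initial: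
  assumes sol: "ode_sol \<sigma> \<eta> \<alpha> h r a \<beta> v" and mono: "mono_on {0<..} v"
    and "\<sigma> \<noteq> 0" "\<eta> > 0" "h > 0" "r > 0" "\<alpha> \<ge> 0"
  shows "r * h \<le> 2 / \<sigma>\<^sup>2 * (\<beta> + \<alpha> / 4 * r\<^sup>2 + \<bar>a\<bar> * r) * \<beta>"
proof -
  have "(0 + r) * (h - \<eta> * 0) \<le>
      2 / \<sigma>\<^sup>2 * (\<beta> + \<alpha> / 4 * r\<^sup>2 + \<bar>a\<bar> * r) * ode_quad \<alpha> a \<beta> 0"
    using assms by (intro mono_ode_sol_crossing_bound[OF sol mono] ode_quad_le_abs_bound) auto
  then show ?thesis
    by (simp add: ode_quad_def)
qed

lemma mono_ode_sol_beta_bound_zero_initial: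
  assumes sol: "ode_sol \<sigma> \<eta> \<alpha> h 0 a \<beta> v" and mono: "mono_on {0<..} v"
    and "\<sigma> \<noteq> 0" "\<eta> > 0" "\<alpha> \<ge> 0" "\<beta> > 0" "\<eta> * \<beta> < h"
  shows "h - \<eta> * \<beta> \<le> 2 / \<sigma>\<^sup>2 * \<beta> * (1 + \<alpha> / 4 * \<beta> + \<bar>a\<bar>)\<^sup>2"
proof -
  define M where "M = \<beta> + \<alpha> / 4 * \<beta>\<^sup>2 + \<bar>a\<bar> * \<beta>"
  have M: "ode_quad \<alpha> a \<beta> w \<le> M" if "w \<in> {0..\<beta>}" for w
    using that \<open>\<alpha> \<ge> 0\<close> unfolding M_def by (intro ode_quad_le_abs_bound) auto
  have "M \<ge> 0"
    using assms unfolding M_def by simp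
  have "\<beta> * (h - \<eta> * \<beta>) \<le> 2 / \<sigma>\<^sup>2 * M * ode_quad \<alpha> a \<beta> \<beta>"
    using mono_ode_sol_crossing_bound[OF sol mono, of \<beta> M] M assms by simp
  also have "\<dots> \<le> 2 / \<sigma>\<^sup>2 * M * M"
    using M[of \<beta>] \<open>M \<ge> 0\<close> \<open>\<beta> > 0\<close> by (intro mult_left_mono) auto
  also have "\<dots> = \<beta> * (2 / \<sigma>\<^sup>2 * \<beta> * (1 + \<alpha> / 4 * \<beta> + \<bar>a\<bar>)\<^sup>2)"
    unfolding M_def by (simp add: power2_eq_square algebra_simps)
  finally show ?thesis
    using \<open>\<beta> > 0\<close> by (simp only: mult_le_cancel_left_pos)
qed

lemma mono_ode_sol_beta_bound_zero_initial_a_pos: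
  assumes sol: "ode_sol \<sigma> \<eta> \<alpha> h 0 a \<beta> v" and mono: "mono_on {0<..} v"
    and "\<sigma> \<noteq> 0" "\<eta> > 0" "s > 0" "\<alpha> * s \<le> 2 * a" "\<eta> * s < h"
  shows "a * s / 2 < \<beta>"
proof -
  have "0 < \<beta> + \<alpha> / 4 * s\<^sup>2 - a * s"
    using mono_ode_sol_quad_pos[OF sol mono, of s] assms by (simp add: ode_quad_def)
  moreover have "\<alpha> * s * s \<le> 2 * a * s"
    using assms by (intro mult_right_mono) auto
  ultimately show ?thesis
    by (simp add: power2_eq_square algebra_simps)
qed

lemma min_le_of_small_imp_le_mult:
  fixes d k C \<beta> :: real
  assumes "0 < C" "\<beta> < d \<Longrightarrow> k \<le> C * \<beta>"
  shows "min d (k / C) \<le> \<beta>"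
  using assms by (cases "\<beta> < d") (auto simp: field_simps min_le_iff_disj)

lemma mono_ode_sol_beta_lower_bound_neg_initial:
  assumes "\<sigma> \<noteq> 0" "\<eta> > 0" "h > 0" "r > 0" "\<alpha> \<ge> 0"
  shows "\<exists>b>0. \<forall>\<beta> v. 0 \<le> \<beta> \<longrightarrow> ode_sol \<sigma> \<eta> \<alpha> h r a \<beta> v \<longrightarrow> mono_on {0<..} v \<longrightarrow> b \<le> \<beta>"
proof -
  define C where "C = 2 / \<sigma>\<^sup>2 * (1 + \<alpha> / 4 * r\<^sup>2 + \<bar>a\<bar> * r)"
  have "C > 0"
    using assms unfolding C_def by (simp add: add_pos_nonneg)
  show ?thesis
  proof (intro exI[of _ "min 1 (r * h / C)"] conjI allI impI)
    show "0 < min 1 (r * h / C)"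
      using assms \<open>C > 0\<close> by simp
    fix \<beta> v
    assume "0 \<le> \<beta>" "ode_sol \<sigma> \<eta> \<alpha> h r a \<beta> v" "mono_on {0<..} v"
    show "min 1 (r * h / C) \<le> \<beta>"
    proof (rule min_le_of_small_imp_le_mult[OF \<open>C > 0\<close>])
      assume "\<beta> < 1"
      have "r * h \<le> 2 / \<sigma>\<^sup>2 * (\<beta> + \<alpha> / 4 * r\<^sup>2 + \<bar>a\<bar> * r) * \<beta>"
        using mono_ode_sol_beta_bound_neg_initial \<open>ode_sol \<sigma> \<eta> \<alpha> h r a \<beta> v\<close> \<open>mono_on {0<..} v\<close>
          assms by blast
      also have "\<dots> \<le> C * \<beta>"
        unfolding C_def using \<open>\<beta> < 1\<close> \<open>0 \<le> \<beta>\<close> by (intro mult_right_mono mult_left_mono) auto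
      finally show "r * h \<le> C * \<beta>" .
    qed
  qed
qed

lemma mono_ode_sol_beta_lower_bound_zero_initial:
  assumes "\<sigma> \<noteq> 0" "\<eta> > 0" "h > 0" "\<alpha> \<ge> 0"
  shows "\<exists>b>0. \<forall>\<beta> v. 0 < \<beta> \<longrightarrow> ode_sol \<sigma> \<eta> \<alpha> h 0 a \<beta> v \<longrightarrow> mono_on {0<..} v \<longrightarrow> b \<le> \<beta>"
proof -
  define C where "C = 2 / \<sigma>\<^sup>2 * (1 + \<alpha> / 4 + \<bar>a\<bar>)\<^sup>2"
  define d where "d = min 1 (h / (2 * \<eta>))"
  have "C > 0"
    using assms unfolding C_def by (simp add: add_pos_nonneg)
  show ?thesis
  proof (intro exI[of _ "min d (h / 2 / C)"] conjI allI impI)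
    show "0 < min d (h / 2 / C)"
      using assms \<open>C > 0\<close> unfolding d_def by simp
    fix \<beta> v
    assume "0 < \<beta>" "ode_sol \<sigma> \<eta> \<alpha> h 0 a \<beta> v" "mono_on {0<..} v"
    show "min d (h / 2 / C) \<le> \<beta>"
    proof (rule min_le_of_small_imp_le_mult[OF \<open>C > 0\<close>])
      assume "\<beta> < d"
      then have "\<beta> < 1" "\<eta> * \<beta> < h / 2"
        using \<open>\<eta> > 0\<close> unfolding d_def by (auto simp: field_simps)
      then have "h / 2 \<le> h - \<eta> * \<beta>"
        by simp
      also have "\<dots> \<le> 2 / \<sigma>\<^sup>2 * \<beta> * (1 + \<alpha> / 4 * \<beta> + \<bar>a\<bar>)\<^sup>2"
        using mono_ode_sol_beta_bound_zero_initial \<open>ode_sol \<sigma> \<eta> \<alpha> h 0 a \<beta> v\<close>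
          \<open>mono_on {0<..} v\<close> \<open>\<beta> > 0\<close> \<open>\<eta> * \<beta> < h / 2\<close> assms by fastforce
      also have "\<dots> \<le> 2 / \<sigma>\<^sup>2 * \<beta> * (1 + \<alpha> / 4 + \<bar>a\<bar>)\<^sup>2"
        using \<open>\<beta> < 1\<close> \<open>0 < \<beta>\<close> \<open>\<alpha> \<ge> 0\<close>
        by (intro mult_left_mono power_mono add_mono order_refl) (auto simp: mult_left_le)
      also have "\<dots> = C * \<beta>"
        unfolding C_def by simp
      finally show "h / 2 \<le> C * \<beta>" .
    qed
  qed
qed

lemma mono_ode_sol_beta_lower_bound_zero_initial_a_pos:
  assumes "\<sigma> \<noteq> 0" "\<eta> > 0" "h > 0" "\<alpha> > 0" "a > 0"
  shows "\<exists>b>0. \<forall>\<beta> v. ode_sol \<sigma> \<eta> \<alpha> h 0 a \<beta> v \<longrightarrow> mono_on {0<..} v \<longrightarrow> b \<le> \<beta>"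
proof -
  define s where "s = min (2 * a / \<alpha>) (h / (2 * \<eta>))"
  have "s > 0"
    using assms unfolding s_def by simp
  have "\<alpha> * s \<le> \<alpha> * (2 * a / \<alpha>)"
    using assms unfolding s_def by (intro mult_left_mono) auto
  then have "\<alpha> * s \<le> 2 * a"
    using assms by simp
  have "\<eta> * s \<le> \<eta> * (h / (2 * \<eta>))"
    using assms unfolding s_def by (intro mult_left_mono) auto
  then have "\<eta> * s < h"
    using assms by simp
  with \<open>s > 0\<close> \<open>\<alpha> * s \<le> 2 * a\<close> show ?thesis
    using mono_ode_sol_beta_bound_zero_initial_a_pos assms
    by (intro exI[of _ "a * s / 2"]) (auto intro: less_imp_le)
qed

lemma Inf_ereal_image_pos:
  fixes S :: "real set"
  assumes "b > 0" "\<And>x. x \<in> S \<Longrightarrow> b \<le> x"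
  shows "Inf (ereal ` S) > 0"
proof -
  have "ereal b \<le> Inf (ereal ` S)"
    using assms(2) by (intro Inf_greatest) auto
  moreover have "0 < ereal b"
    using assms(1) by simp
  ultimately show ?thesis
    by (meson less_le_trans)
qed

theorem lemma21:
  fixes \<sigma> \<eta> \<alpha> h r a :: real
  assumes "\<sigma> > 0" "\<eta> > 0" "\<alpha> > 0" "h > 0" "r \<ge> 0"
  shows "(a > - \<alpha> / 4 * r \<longrightarrow> Inf (ereal ` I1 \<sigma> \<eta> \<alpha> h r a) > 0) \<and>
         (a \<le> - \<alpha> / 4 * r \<longrightarrow> Inf (ereal ` I2 \<sigma> \<eta> \<alpha> h r a) > 0)"
proof (intro conjI impI)
  assume "a > - \<alpha> / 4 * r"
  then have "r > 0 \<or> r = 0 \<and> a > 0"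
    using assms by auto
  then obtain b where "b > 0"
    and "\<forall>\<beta> v. 0 \<le> \<beta> \<longrightarrow> ode_sol \<sigma> \<eta> \<alpha> h r a \<beta> v \<longrightarrow> mono_on {0<..} v \<longrightarrow> b \<le> \<beta>"
    using mono_ode_sol_beta_lower_bound_neg_initial mono_ode_sol_beta_lower_bound_zero_initial_a_pos
      assms by (metis less_imp_le less_irrefl)
  then show "Inf (ereal ` I1 \<sigma> \<eta> \<alpha> h r a) > 0"
    by (intro Inf_ereal_image_pos) (auto simp: I1_def)
next
  assume "a \<le> - \<alpha> / 4 * r"
  then have "beta2_low \<alpha> r a \<ge> 0"
    using mult_right_mono[OF \<open>a \<le> - \<alpha> / 4 * r\<close> \<open>r \<ge> 0\<close>]
    unfolding beta2_low_def by (simp add: power2_eq_square)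
  obtain b where "b > 0"
    and "\<forall>\<beta> v. 0 < \<beta> \<longrightarrow> ode_sol \<sigma> \<eta> \<alpha> h r a \<beta> v \<longrightarrow> mono_on {0<..} v \<longrightarrow> b \<le> \<beta>"
    using mono_ode_sol_beta_lower_bound_neg_initial mono_ode_sol_beta_lower_bound_zero_initial assms
    by (metis less_eq_real_def less_irrefl)
  with \<open>beta2_low \<alpha> r a \<ge> 0\<close> show "Inf (ereal ` I2 \<sigma> \<eta> \<alpha> h r a) > 0"
    by (intro Inf_ereal_image_pos) (auto simp: I2_def)
qed

end
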